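(* Let $k_1,k_2\in\mathbb{Z}_{>0}$, $\theta_1=1/k_1$, $\theta_2=1/k_2$, and let $d\mu_1,d\mu_2$ be non-negative measures on $\mathbb{R}_+$ for which all the moments below are finite. Let $\langle f(x),g(y)\rangle=\int_{\mathbb{R}_+\times\mathbb{R}_+}\frac{f(x)g(y)}{x+y}\,d\mu_1(x)\,d\mu_2(y)$, and let $\{P_n(x^{\theta_1}),Q_n(y^{\theta_2})\}_{n\ge0}$ be the monic two-parameter Cauchy bi-orthogonal polynomials ($P_n$ monic of degree $n$ in $x^{\theta_1}$, $Q_n$ monic of degree $n$ in $y^{\theta_2}$, $\langle P_n(x^{\theta_1}),Q_m(y^{\theta_2})\rangle=h_n\delta_{n,m}$, $h_n>0$). Then for each $n\ge0$ $$y\left(Q_{n+1}(y^{\theta_2})+\hat a_nQ_n(y^{\theta_2})\right)=\sum_{\alpha=n-k_1}^{n+k_2+1}\hat\eta_{n,\alpha}Q_\alpha(y^{\theta_2}),$$ where $$\hat a_n=-\frac{\int_{\mathbb{R}_+}Q_{n+1}(y^{\theta_2})\,d\mu_2(y)}{\int_{\mathbb{R}_+}Q_{n}(y^{\theta_2})\,d\mu_2(y)},\qquad \hat\eta_{n,\alpha}=\frac{\langle P_\alpha(x^{\theta_1}),\, y(Q_{n+1}(y^{\theta_2})+\hat a_nQ_n(y^{\theta_2}))\rangle}{\langle P_\alpha(x^{\theta_1}), Q_\alpha(y^{\theta_2})\rangle}$$ (and $Q_\alpha:=0$ for $\alpha<0$).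
   Context: The polynomials exist and are unique provided the determinants $\tau_n=\det(\langle x^{(k-1)\theta_1},y^{(l-1)\theta_2}\rangle)_{k,l=1}^n$ are nonzero for all $n$, which is assumed. Quantities appearing in denominators are assumed nonzero so that the coefficients are defined. *)

theory Defs
  imports "HOL-Analysis.Analysis" "HOL-Probability.Probability" "HOL-Computational_Algebra.Polynomial"
begin

definition cpair :: "real measure \<Rightarrow> real measure \<Rightarrow> (real \<Rightarrow> real) \<Rightarrow> (real \<Rightarrow> real) \<Rightarrow> real" where
  "cpair mu1 mu2 f g = integral\<^sup>L (mu1 \<Otimes>\<^sub>M mu2) (\<lambda>(x, y). f x * g y / (x + y))"

end

theory Submission
  imports Defs
begin

text \<open>Put R = Q_(n+1) + a_n Q_n and T = X^k2 R, so that the left-hand side is T(y^\<theta>2) for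
  y \<ge> 0. Since T has degree n + k2 + 1, biorthogonality expands it in the Q_\<alpha> with exactly the
  coefficients \<eta>_(n,\<alpha>). For the lower cut-off write y / (x + y) = 1 - x / (x + y):
  <P_\<alpha>, y R> = (\<integral> P_\<alpha> d\<mu>1) (\<integral> R d\<mu>2) - <x P_\<alpha>, R>, where the first term vanishes by the
  choice of a_n and the second because x P_\<alpha> has degree \<alpha> + k1 < n in x^\<theta>1.

  The analytic prerequisites come from h_0 > 0: it makes 1 / (x + y) integrable, which excludes
  an infinite atom at the origin, while the zeroth moments bound the mass elsewhere. So both
  measures are finite, and every kernel p(x^\<theta>1) q(y^\<theta>2) / (x + y) is integrable, being
  dominated by a multiple of 1 / (x + y) near the origin and by |p(x^\<theta>1) q(y^\<theta>2)| elsewhere.\<close>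

lemma emeasure_space_nonzero_if_integral_nonzero:
  fixes f :: "'a \<Rightarrow> real"
  assumes "integral\<^sup>L M f \<noteq> 0"
  shows "emeasure M (space M) \<noteq> 0"
proof
  assume "emeasure M (space M) = 0"
  then have "AE x in M. f x = 0"
    by (intro AE_I'[of "space M"]) (auto simp: null_sets_def)
  then show False
    using assms integral_eq_zero_AE by blast
qed

text \<open>The pair measure is built with \<open>measure_of\<close>, which returns the zero measure unless the
  iterated integral is countably additive; without \<open>\<sigma>\<close>-finiteness of the factors the only
  available witness of additivity is that the product is not the zero measure.\<close>

lemma emeasure_pair_measure_Times_if_nontrivial:
  assumes nontrivial: "emeasure (M1 \<Otimes>\<^sub>M M2) (space (M1 \<Otimes>\<^sub>M M2)) \<noteq> 0"
    and A: "A \<in> sets M1" and B: "B \<in> sets M2"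
  shows "emeasure (M1 \<Otimes>\<^sub>M M2) (A \<times> B) = emeasure M1 A * emeasure M2 B"
proof -
  let ?\<Omega> = "space M1 \<times> space M2"
  let ?G = "{a \<times> b | a b. a \<in> sets M1 \<and> b \<in> sets M2}"
  let ?\<mu> = "\<lambda>X. \<integral>\<^sup>+x. (\<integral>\<^sup>+y. indicator X (x, y) \<partial>M2) \<partial>M1"
  have emeasure_eq: "emeasure (M1 \<Otimes>\<^sub>M M2) = (\<lambda>X. if X \<in> sigma_sets ?\<Omega> ?G
      \<and> measure_space ?\<Omega> (sigma_sets ?\<Omega> ?G) ?\<mu> then ?\<mu> X else 0)"
    unfolding pair_measure_def by (rule emeasure_measure_of_conv)
  have "measure_space ?\<Omega> (sigma_sets ?\<Omega> ?G) ?\<mu>"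
    using nontrivial by (auto simp: emeasure_eq split: if_split_asm)
  moreover have "A \<times> B \<in> sigma_sets ?\<Omega> ?G"
    using A B by (intro sigma_sets.Basic) blast
  ultimately have "emeasure (M1 \<Otimes>\<^sub>M M2) (A \<times> B) = ?\<mu> (A \<times> B)"
    by (simp add: emeasure_eq)
  also have "\<dots> = \<integral>\<^sup>+x. emeasure M2 B * indicator A x \<partial>M1"
  proof (intro nn_integral_cong)
    fix x
    have "(\<integral>\<^sup>+y. indicator (A \<times> B) (x, y) \<partial>M2) = (\<integral>\<^sup>+y. indicator A x * indicator B y \<partial>M2)"
      by (intro nn_integral_cong) (auto simp: indicator_def)
    then show "(\<integral>\<^sup>+y. indicator (A \<times> B) (x, y) \<partial>M2) = emeasure M2 B * indicator A x"
      using B by (simp add: nn_integral_cmult mult.commute)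
  qed
  also have "\<dots> = emeasure M2 B * emeasure M1 A"
    using A by (rule nn_integral_cmult_indicator)
  finally show ?thesis
    by (simp add: mult.commute)
qed

lemma emeasure_finite_if_integrable_ge:
  fixes f :: "'a \<Rightarrow> real"
  assumes f: "integrable M f" and E: "E \<in> sets M" and c: "0 < c"
    and ge: "AE x in M. x \<in> E \<longrightarrow> c \<le> f x"
  shows "emeasure M E < \<infinity>"
proof -
  have "ennreal c * emeasure M E = (\<integral>\<^sup>+x. ennreal c * indicator E x \<partial>M)"
    using E by (simp add: nn_integral_cmult_indicator)
  also have "\<dots> \<le> (\<integral>\<^sup>+x. ennreal (norm (f x)) \<partial>M)"
    using ge by (intro nn_integral_mono_AE) (auto elim!: eventually_mono simp: indicator_def)
  also have "\<dots> < \<infinity>"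
    using f by (simp add: integrable_iff_bounded)
  finally show ?thesis
    using c by (auto simp: ennreal_mult_less_top)
qed

lemma emeasure_space_eq_0_if_atMost:
  fixes M :: "real measure"
  assumes sets: "sets M = sets borel" and null: "\<And>m::nat. emeasure M {..real m} = 0"
  shows "emeasure M (space M) = 0"
proof -
  have "space M = (\<Union>m. {..real m})"
    using sets_eq_imp_space_eq[OF sets] real_arch_simple by auto
  also have "emeasure M \<dots> = 0"
    using null sets by (intro emeasure_UN_eq_0) auto
  finally show ?thesis .
qed

lemma point_masses_finite_if_integrable_inverse_sum:
  fixes M1 M2 :: "real measure"
  assumes sets1: "sets M1 = sets borel" and sets2: "sets M2 = sets borel"
    and nontrivial: "emeasure (M1 \<Otimes>\<^sub>M M2) (space (M1 \<Otimes>\<^sub>M M2)) \<noteq> 0"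
    and pos: "AE p in M1 \<Otimes>\<^sub>M M2. fst p + snd p > 0"
    and int: "integrable (M1 \<Otimes>\<^sub>M M2) (\<lambda>(x, y). 1 / (x + y))"
  shows "emeasure M1 {0} \<noteq> \<infinity> \<and> emeasure M2 {0} \<noteq> \<infinity>"
proof -
  have rect: "emeasure (M1 \<Otimes>\<^sub>M M2) (A \<times> B) = emeasure M1 A * emeasure M2 B"
    if "A \<in> sets borel" "B \<in> sets borel" for A B
    using emeasure_pair_measure_Times_if_nontrivial[OF nontrivial] that sets1 sets2 by simp
  have bounded_rect: "emeasure M1 A * emeasure M2 B < \<infinity>"
    if "A \<in> sets borel" "B \<in> sets borel" "A \<times> B \<subseteq> {p. fst p + snd p \<le> real m}" for A B m
  proof -
    have "AE p in M1 \<Otimes>\<^sub>M M2. p \<in> A \<times> B \<longrightarrow> 1 / (real m + 1) \<le> (\<lambda>(x, y). 1 / (x + y)) p"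
      using pos
    proof (rule eventually_mono)
      fix p :: "real \<times> real"
      assume "fst p + snd p > 0"
      then show "p \<in> A \<times> B \<longrightarrow> 1 / (real m + 1) \<le> (\<lambda>(x, y). 1 / (x + y)) p"
        using that(3) by (auto simp: case_prod_beta' intro!: divide_left_mono)
    qed
    then have "emeasure (M1 \<Otimes>\<^sub>M M2) (A \<times> B) < \<infinity>"
      using that sets1 sets2 by (intro emeasure_finite_if_integrable_ge[OF int]) auto
    then show ?thesis
      using rect that by simp
  qed
  have product_null: "emeasure (M1 \<Otimes>\<^sub>M M2) (space (M1 \<Otimes>\<^sub>M M2)) = 0"
    if "emeasure M1 (space M1) = 0 \<or> emeasure M2 (space M2) = 0"
    using that rect[of UNIV UNIV] sets_eq_imp_space_eq[OF sets1] sets_eq_imp_space_eq[OF sets2]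
    by (auto simp: space_pair_measure)
  have "emeasure M2 (space M2) = 0" if "emeasure M1 {0} = \<infinity>"
  proof (rule emeasure_space_eq_0_if_atMost[OF sets2])
    fix m :: nat
    have "{0} \<times> {..real m} \<subseteq> {p. fst p + snd p \<le> real m}"
      by auto
    then show "emeasure M2 {..real m} = 0"
      using bounded_rect[of "{0}" "{..real m}" m] that by (auto simp: ennreal_mult_less_top)
  qed
  moreover have "emeasure M1 (space M1) = 0" if "emeasure M2 {0} = \<infinity>"
  proof (rule emeasure_space_eq_0_if_atMost[OF sets1])
    fix m :: nat
    have "{..real m} \<times> {0} \<subseteq> {p. fst p + snd p \<le> real m}"
      by auto
    then show "emeasure M1 {..real m} = 0"
      using bounded_rect[of "{..real m}" "{0}" m] that by (auto simp: ennreal_mult_less_top)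
  qed
  ultimately show ?thesis
    using product_null nontrivial by blast
qed

text \<open>Because \<open>0 powr 0 = 0\<close>, the zeroth moment only controls the mass away from the origin.\<close>

lemma finite_measure_if_integrable_powr_0:
  fixes M :: "real measure"
  assumes sets: "sets M = sets borel" and int: "integrable M (\<lambda>x. x powr 0)"
    and origin: "emeasure M {0} \<noteq> \<infinity>"
  shows "finite_measure M"
proof
  have "emeasure M (- {0}) = (\<integral>\<^sup>+x. indicator (- {0}) x \<partial>M)"
    using sets by simp
  also have "\<dots> = (\<integral>\<^sup>+x. ennreal (norm (x powr 0)) \<partial>M)"
    by (intro nn_integral_cong) (simp add: indicator_def)
  also have "\<dots> < \<infinity>"
    using int by (simp add: integrable_iff_bounded)
  finally have "emeasure M (- {0}) < \<infinity>" .
  moreover have "emeasure M (space M) \<le> emeasure M {0} + emeasure M (- {0})"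
    using sets sets_eq_imp_space_eq[OF sets] emeasure_subadditive[of "{0}" M "- {0}"]
    by (simp add: Un_absorb2 Compl_partition)
  ultimately show "emeasure M (space M) \<noteq> \<infinity>"
    using origin by (auto simp: top_unique less_top[symmetric])
qed

lemma (in pair_sigma_finite) integrable_product:
  fixes f :: "'a \<Rightarrow> real" and g :: "'b \<Rightarrow> real"
  assumes f: "integrable M1 f" and g: "integrable M2 g"
  shows "integrable (M1 \<Otimes>\<^sub>M M2) (\<lambda>(x, y). f x * g y)"
proof (rule Fubini_integrable)
  have [measurable]: "f \<in> borel_measurable M1" "g \<in> borel_measurable M2"
    using f g by auto
  show "(\<lambda>(x, y). f x * g y) \<in> borel_measurable (M1 \<Otimes>\<^sub>M M2)"
    by measurable
  have "integrable M1 (\<lambda>x. \<bar>f x\<bar> * (\<integral>y. \<bar>g y\<bar> \<partial>M2))"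
    using f by (intro integrable_mult_left integrable_abs)
  then show "integrable M1 (\<lambda>x. \<integral>y. norm ((\<lambda>(x, y). f x * g y) (x, y)) \<partial>M2)"
    by (simp add: abs_mult)
  show "AE x in M1. integrable M2 (\<lambda>y. (\<lambda>(x, y). f x * g y) (x, y))"
    using g by simp
qed

lemma (in pair_sigma_finite) integral_product:
  fixes f :: "'a \<Rightarrow> real" and g :: "'b \<Rightarrow> real"
  assumes "integrable M1 f" and "integrable M2 g"
  shows "integral\<^sup>L (M1 \<Otimes>\<^sub>M M2) (\<lambda>(x, y). f x * g y) = integral\<^sup>L M1 f * integral\<^sup>L M2 g"
  using integral_fst'[OF integrable_product[OF assms]] by simp

lemma powr_inverse_power_cancel:
  fixes y :: real
  assumes "0 \<le> y" and "0 < k"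
  shows "(y powr (1 / real k)) ^ k = y"
  using assms by (cases "y = 0") (simp_all add: powr_power)

lemma power_powr_inverse:
  fixes x :: real
  assumes "0 < i"
  shows "(x powr (1 / real k)) ^ i = x powr (real i / real k)"
  using assms by (cases "x = 0") (simp_all add: powr_power)

lemma poly_monom_mult_powr_inverse:
  fixes y :: real
  assumes "0 \<le> y" and "0 < k"
  shows "poly (monom 1 k * p) (y powr (1 / real k)) = y * poly p (y powr (1 / real k))"
  using powr_inverse_power_cancel[OF assms] by (simp add: poly_monom)

lemma integrable_poly_powr:
  fixes M :: "real measure"
  assumes fin: "finite_measure M"
    and moments: "\<And>i::nat. integrable M (\<lambda>x. x powr (real i / real k))"
  shows "integrable M (\<lambda>x. poly p (x powr (1 / real k)))"
proof -
  have "integrable M (\<lambda>x. (x powr (1 / real k)) ^ i)" for i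
    using moments[of i] finite_measure.integrable_const[OF fin]
    by (cases "i = 0") (simp_all add: power_powr_inverse)
  then have "integrable M (\<lambda>x. \<Sum>i\<le>degree p. coeff p i * (x powr (1 / real k)) ^ i)"
    by (intro Bochner_Integration.integrable_sum integrable_mult_right)
  then show ?thesis
    by (simp add: poly_altdef)
qed

lemma abs_poly_le_sum_abs_coeff:
  fixes z :: real
  assumes "\<bar>z\<bar> \<le> 1"
  shows "\<bar>poly p z\<bar> \<le> (\<Sum>i\<le>degree p. \<bar>coeff p i\<bar>)"
proof -
  have "\<bar>poly p z\<bar> \<le> (\<Sum>i\<le>degree p. \<bar>coeff p i * z ^ i\<bar>)"
    unfolding poly_altdef by (rule sum_abs)
  also have "\<dots> \<le> (\<Sum>i\<le>degree p. \<bar>coeff p i\<bar>)"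
    using assms by (intro sum_mono) (simp add: abs_mult power_abs power_le_one mult_left_le)
  finally show ?thesis .
qed

lemma monic_family_spans:
  fixes F :: "nat \<Rightarrow> 'a::field poly"
  assumes monic: "\<And>m. degree (F m) = m \<and> lead_coeff (F m) = 1"
  shows "degree p \<le> N \<Longrightarrow> \<exists>c. p = (\<Sum>j\<le>N. smult (c j) (F j))"
proof (induction N arbitrary: p)
  case 0
  have "F 0 = 1"
    using monic[of 0] by (metis degree_0_id one_pCons)
  then have "p = (\<Sum>j\<le>0. smult ((\<lambda>_. coeff p 0) j) (F j))"
    using 0 by (simp add: degree_0_id)
  then show ?case
    by (intro exI[of _ "\<lambda>_. coeff p 0"])
next
  case (Suc N)
  define q where "q = p - smult (coeff p (Suc N)) (F (Suc N))"
  have degree_F: "degree (F (Suc N)) = Suc N" and lead_F: "coeff (F (Suc N)) (Suc N) = 1"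
    using monic[of "Suc N"] by auto
  have "degree q \<le> Suc N"
    unfolding q_def using Suc.prems degree_F
    by (intro degree_diff_le) (auto intro: order.trans[OF degree_smult_le])
  moreover have "degree q \<noteq> Suc N"
  proof
    assume "degree q = Suc N"
    moreover have "coeff q (Suc N) = 0"
      unfolding q_def using lead_F by simp
    ultimately show False
      by (metis leading_coeff_0_iff degree_0 Zero_not_Suc)
  qed
  ultimately have "degree q \<le> N"
    by simp
  then obtain c where c: "q = (\<Sum>j\<le>N. smult (c j) (F j))"
    using Suc.IH by blast
  have "p = (\<Sum>j\<le>Suc N. smult ((c(Suc N := coeff p (Suc N))) j) (F j))"
    using c[symmetric] by (simp add: q_def)
  then show ?case
    by (intro exI[of _ "c(Suc N := coeff p (Suc N))"])
qed

lemma abs_mult_div_sum_le: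
  fixes x y a b A B :: real
  assumes "0 < x + y" "0 \<le> A" "0 \<le> B"
    and small: "x + y < 1 \<Longrightarrow> \<bar>a\<bar> \<le> A \<and> \<bar>b\<bar> \<le> B"
  shows "\<bar>a * b / (x + y)\<bar> \<le> A * B / (x + y) + \<bar>a\<bar> * \<bar>b\<bar>"
proof (cases "x + y < 1")
  case True
  then have "\<bar>a\<bar> * \<bar>b\<bar> \<le> A * B"
    using small by (intro mult_mono) auto
  then show ?thesis
    using assms(1) by (simp add: abs_mult divide_right_mono add_increasing2)
next
  case False
  then have "\<bar>a * b\<bar> / (x + y) \<le> \<bar>a * b\<bar>"
    by (simp add: divide_le_eq mult_le_cancel_left1)
  then show ?thesis
    using assms by (simp add: abs_mult add_increasing)
qed

locale cauchy_pairing =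
  fixes mu1 mu2 :: "real measure" and k1 k2 :: nat
  assumes k1_pos: "0 < k1" and k2_pos: "0 < k2"
    and sets1: "sets mu1 = sets borel" and sets2: "sets mu2 = sets borel"
    and supp1: "AE x in mu1. 0 \<le> x" and supp2: "AE y in mu2. 0 \<le> y"
    and diag: "AE p in mu1 \<Otimes>\<^sub>M mu2. fst p + snd p > 0"
    and mom1: "\<And>i::nat. integrable mu1 (\<lambda>x. x powr (real i / real k1))"
    and mom2: "\<And>j::nat. integrable mu2 (\<lambda>y. y powr (real j / real k2))"
    and finite1: "finite_measure mu1" and finite2: "finite_measure mu2"
    and integrable_inverse_sum: "integrable (mu1 \<Otimes>\<^sub>M mu2) (\<lambda>(x, y). 1 / (x + y))"
begin

sublocale pair_sigma_finite mu1 mu2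
  using finite1 finite2 unfolding finite_measure_def pair_sigma_finite_def by blast

definition form :: "real poly \<Rightarrow> real poly \<Rightarrow> real" where
  "form p q = cpair mu1 mu2 (\<lambda>x. poly p (x powr (1 / real k1))) (\<lambda>y. poly q (y powr (1 / real k2)))"

definition kernel :: "real poly \<Rightarrow> real poly \<Rightarrow> real \<times> real \<Rightarrow> real" where
  "kernel p q = (\<lambda>(x, y). poly p (x powr (1 / real k1)) * poly q (y powr (1 / real k2)) / (x + y))"

lemma form_eq_integral_kernel: "form p q = integral\<^sup>L (mu1 \<Otimes>\<^sub>M mu2) (kernel p q)"
  unfolding form_def cpair_def kernel_def ..

lemma integrable_poly1: "integrable mu1 (\<lambda>x. poly p (x powr (1 / real k1)))"
  by (rule integrable_poly_powr[OF finite1 mom1])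

lemma integrable_poly2: "integrable mu2 (\<lambda>y. poly q (y powr (1 / real k2)))"
  by (rule integrable_poly_powr[OF finite2 mom2])

lemma measurable_ident1 [measurable]: "(\<lambda>x. x) \<in> borel_measurable mu1"
  by (rule measurable_ident_sets[OF sets1])

lemma measurable_ident2 [measurable]: "(\<lambda>x. x) \<in> borel_measurable mu2"
  by (rule measurable_ident_sets[OF sets2])

lemma measurable_poly1 [measurable]: "(\<lambda>x. poly p (x powr (1 / real k1))) \<in> borel_measurable mu1"
  using integrable_poly1 by (rule borel_measurable_integrable)

lemma measurable_poly2 [measurable]: "(\<lambda>y. poly q (y powr (1 / real k2))) \<in> borel_measurable mu2"
  using integrable_poly2 by (rule borel_measurable_integrable)

lemma measurable_kernel [measurable]: "kernel p q \<in> borel_measurable (mu1 \<Otimes>\<^sub>M mu2)"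
  unfolding kernel_def by measurable

lemma AE_nonneg_pos_sum:
  "AE z in mu1 \<Otimes>\<^sub>M mu2. 0 \<le> fst z \<and> 0 \<le> snd z \<and> 0 < fst z + snd z"
proof -
  have "AE z in mu1 \<Otimes>\<^sub>M mu2. 0 \<le> fst z \<and> 0 \<le> snd z"
  proof (rule AE_pair_measure)
    show "{z \<in> space (mu1 \<Otimes>\<^sub>M mu2). 0 \<le> fst z \<and> 0 \<le> snd z} \<in> sets (mu1 \<Otimes>\<^sub>M mu2)"
      by measurable
    show "AE x in mu1. AE y in mu2. 0 \<le> fst (x, y) \<and> 0 \<le> snd (x, y)"
      using supp1 supp2 by (auto elim!: eventually_mono)
  qed
  with diag show ?thesis
    by eventually_elim auto
qed

lemma integrable_kernel: "integrable (mu1 \<Otimes>\<^sub>M mu2) (kernel p q)"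
proof -
  define A where "A = (\<Sum>i\<le>degree p. \<bar>coeff p i\<bar>)"
  define B where "B = (\<Sum>i\<le>degree q. \<bar>coeff q i\<bar>)"
  define bound where "bound = (\<lambda>(x, y). A * B / (x + y)
      + \<bar>poly p (x powr (1 / real k1))\<bar> * \<bar>poly q (y powr (1 / real k2))\<bar>)"
  have "A \<ge> 0" "B \<ge> 0"
    unfolding A_def B_def by (auto intro: sum_nonneg)
  have "integrable (mu1 \<Otimes>\<^sub>M mu2) (\<lambda>z. A * B * (\<lambda>(x, y). 1 / (x + y)) z)"
    using integrable_inverse_sum by (rule integrable_mult_right)
  then have "integrable (mu1 \<Otimes>\<^sub>M mu2) bound"
    unfolding bound_def case_prod_beta'
    by (intro Bochner_Integration.integrable_add integrable_product[unfolded case_prod_beta']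
        integrable_abs integrable_poly1 integrable_poly2) simp
  then show ?thesis
  proof (rule Bochner_Integration.integrable_bound)
    show "AE z in mu1 \<Otimes>\<^sub>M mu2. norm (kernel p q z) \<le> norm (bound z)"
      using AE_nonneg_pos_sum
    proof (rule eventually_mono)
      fix z :: "real \<times> real"
      obtain x y where z: "z = (x, y)" by fastforce
      assume "0 \<le> fst z \<and> 0 \<le> snd z \<and> 0 < fst z + snd z"
      then have xy: "0 \<le> x" "0 \<le> y" "0 < x + y"
        using z by auto
      have "\<bar>kernel p q z\<bar> \<le> bound z"
        unfolding kernel_def bound_def z case_prod_conv
      proof (rule abs_mult_div_sum_le)
        assume "x + y < 1"
        then have "x powr (1 / real k1) \<le> 1" "y powr (1 / real k2) \<le> 1"
          using xy by (auto intro: powr_le1)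
        then show "\<bar>poly p (x powr (1 / real k1))\<bar> \<le> A \<and> \<bar>poly q (y powr (1 / real k2))\<bar> \<le> B"
          unfolding A_def B_def by (auto intro!: abs_poly_le_sum_abs_coeff)
      qed (use xy \<open>A \<ge> 0\<close> \<open>B \<ge> 0\<close> in auto)
      moreover have "0 \<le> bound z"
        unfolding bound_def z using xy \<open>A \<ge> 0\<close> \<open>B \<ge> 0\<close> by simp
      ultimately show "norm (kernel p q z) \<le> norm (bound z)"
        by simp
    qed
  qed simp
qed

lemma form_sum_left: "form (\<Sum>j\<in>J. smult (c j) (f j)) q = (\<Sum>j\<in>J. c j * form (f j) q)"
proof -
  have "kernel (\<Sum>j\<in>J. smult (c j) (f j)) q = (\<lambda>z. \<Sum>j\<in>J. c j * kernel (f j) q z)"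
    by (simp add: fun_eq_iff kernel_def case_prod_beta' poly_sum sum_distrib_left
        sum_distrib_right sum_divide_distrib mult.assoc)
  then show ?thesis
    by (simp add: form_eq_integral_kernel integrable_kernel)
qed

lemma form_sum_right: "form p (\<Sum>j\<in>J. smult (c j) (f j)) = (\<Sum>j\<in>J. c j * form p (f j))"
proof -
  have "kernel p (\<Sum>j\<in>J. smult (c j) (f j)) = (\<lambda>z. \<Sum>j\<in>J. c j * kernel p (f j) z)"
    by (simp add: fun_eq_iff kernel_def case_prod_beta' poly_sum sum_distrib_left
        sum_divide_distrib mult.left_commute)
  then show ?thesis
    by (simp add: form_eq_integral_kernel integrable_kernel)
qed

lemma form_add_right: "form p (q1 + q2) = form p q1 + form p q2"
proof -
  have "kernel p (q1 + q2) = (\<lambda>z. kernel p q1 z + kernel p q2 z)"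
    by (simp add: fun_eq_iff kernel_def case_prod_beta' add_divide_distrib distrib_left)
  then show ?thesis
    by (simp add: form_eq_integral_kernel integrable_kernel)
qed

lemma form_smult_right: "form p (smult c q) = c * form p q"
proof -
  have "kernel p (smult c q) = (\<lambda>z. c * kernel p q z)"
    by (simp add: fun_eq_iff kernel_def case_prod_beta')
  then show ?thesis
    by (simp add: form_eq_integral_kernel)
qed

lemma form_monom_mult_right:
  "form p (monom 1 k2 * r) = (\<integral>x. poly p (x powr (1 / real k1)) \<partial>mu1)
      * (\<integral>y. poly r (y powr (1 / real k2)) \<partial>mu2) - form (monom 1 k1 * p) r"
proof -
  let ?product = "\<lambda>(x, y). poly p (x powr (1 / real k1)) * poly r (y powr (1 / real k2))"
  have "AE z in mu1 \<Otimes>\<^sub>M mu2. kernel p (monom 1 k2 * r) z = ?product z - kernel (monom 1 k1 * p) r z"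
    using AE_nonneg_pos_sum
  proof (rule eventually_mono)
    fix z :: "real \<times> real"
    obtain x y where z: "z = (x, y)" by fastforce
    assume "0 \<le> fst z \<and> 0 \<le> snd z \<and> 0 < fst z + snd z"
    then have "0 \<le> x" "0 \<le> y" "x + y \<noteq> 0"
      using z by auto
    have shift2: "poly (monom 1 k2 * r) (y powr (1 / real k2)) = y * poly r (y powr (1 / real k2))"
      using \<open>0 \<le> y\<close> k2_pos by (rule poly_monom_mult_powr_inverse)
    have shift1: "poly (monom 1 k1 * p) (x powr (1 / real k1)) = x * poly p (x powr (1 / real k1))"
      using \<open>0 \<le> x\<close> k1_pos by (rule poly_monom_mult_powr_inverse)
    show "kernel p (monom 1 k2 * r) z = ?product z - kernel (monom 1 k1 * p) r z"
      unfolding kernel_def z case_prod_conv shift1 shift2 using \<open>x + y \<noteq> 0\<close> by (simp add: field_simps)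
  qed
  then have "form p (monom 1 k2 * r) = integral\<^sup>L (mu1 \<Otimes>\<^sub>M mu2) (\<lambda>z. ?product z - kernel (monom 1 k1 * p) r z)"
    unfolding form_eq_integral_kernel by (intro integral_cong_AE) auto
  also have "\<dots> = integral\<^sup>L (mu1 \<Otimes>\<^sub>M mu2) ?product - form (monom 1 k1 * p) r"
    unfolding form_eq_integral_kernel
    by (intro Bochner_Integration.integral_diff integrable_product integrable_poly1
        integrable_poly2 integrable_kernel)
  finally show ?thesis
    by (simp add: integral_product integrable_poly1 integrable_poly2)
qed

lemma cpair_eq_form_if_eq_on_nonneg:
  assumes g_measurable: "g \<in> borel_measurable mu2"
    and g_eq: "\<And>y. 0 \<le> y \<Longrightarrow> g y = poly q (y powr (1 / real k2))"
  shows "cpair mu1 mu2 (\<lambda>x. poly p (x powr (1 / real k1))) g = form p q"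
  unfolding cpair_def form_eq_integral_kernel kernel_def
proof (intro integral_cong_AE)
  show "AE z in mu1 \<Otimes>\<^sub>M mu2. (\<lambda>(x, y). poly p (x powr (1 / real k1)) * g y / (x + y)) z
      = (\<lambda>(x, y). poly p (x powr (1 / real k1)) * poly q (y powr (1 / real k2)) / (x + y)) z"
    using AE_nonneg_pos_sum by (rule eventually_mono) (auto simp: g_eq)
qed (use g_measurable in measurable)

end

lemma cauchy_pairing_if_integral_inverse_sum_nonzero:
  fixes mu1 mu2 :: "real measure" and k1 k2 :: nat
  assumes "0 < k1" and "0 < k2"
    and sets1: "sets mu1 = sets borel" and sets2: "sets mu2 = sets borel"
    and "AE x in mu1. 0 \<le> x" and "AE y in mu2. 0 \<le> y"
    and diag: "AE p in mu1 \<Otimes>\<^sub>M mu2. fst p + snd p > 0"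
    and mom1: "\<And>i::nat. integrable mu1 (\<lambda>x. x powr (real i / real k1))"
    and mom2: "\<And>j::nat. integrable mu2 (\<lambda>y. y powr (real j / real k2))"
    and nonzero: "integral\<^sup>L (mu1 \<Otimes>\<^sub>M mu2) (\<lambda>(x, y). 1 / (x + y)) \<noteq> (0::real)"
  shows "cauchy_pairing mu1 mu2 k1 k2"
proof -
  have integrable: "integrable (mu1 \<Otimes>\<^sub>M mu2) (\<lambda>(x, y). 1 / (x + y) :: real)"
    using nonzero not_integrable_integral_eq by blast
  have "emeasure mu1 {0} \<noteq> \<infinity> \<and> emeasure mu2 {0} \<noteq> \<infinity>"
    using emeasure_space_nonzero_if_integral_nonzero[OF nonzero] sets1 sets2 diag integrable
    by (intro point_masses_finite_if_integrable_inverse_sum)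
  then have "finite_measure mu1" and "finite_measure mu2"
    using finite_measure_if_integrable_powr_0 sets1 sets2 mom1[of 0] mom2[of 0] by simp_all
  with assms integrable show ?thesis
    by (intro cauchy_pairing.intro)
qed

locale cauchy_biorthogonal = cauchy_pairing +
  fixes P Q :: "nat \<Rightarrow> real poly"
  assumes P_monic: "\<And>m. degree (P m) = m \<and> lead_coeff (P m) = 1"
    and Q_monic: "\<And>m. degree (Q m) = m \<and> lead_coeff (Q m) = 1"
    and biorthogonal: "\<And>m l. m \<noteq> l \<Longrightarrow> form (P m) (Q l) = 0"
    and form_diagonal_nonzero: "\<And>m. form (P m) (Q m) \<noteq> 0"
begin

lemma form_eq_0_if_degree_less:
  assumes "degree S < l"
  shows "form S (Q l) = 0"
proof -
  have "degree S \<le> l - 1"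
    using assms by simp
  then obtain d where "S = (\<Sum>i\<le>l - 1. smult (d i) (P i))"
    using monic_family_spans[OF P_monic] by blast
  then have "form S (Q l) = (\<Sum>i\<le>l - 1. d i * form (P i) (Q l))"
    by (simp add: form_sum_left)
  also have "\<dots> = 0"
    using assms by (intro sum.neutral) (auto simp: biorthogonal)
  finally show ?thesis .
qed

lemma Q_expansion:
  assumes "degree p \<le> N"
  shows "p = (\<Sum>j\<le>N. smult (form (P j) p / form (P j) (Q j)) (Q j))"
proof -
  obtain c where c: "p = (\<Sum>j\<le>N. smult (c j) (Q j))"
    using monic_family_spans[OF Q_monic assms] by blast
  have "form (P i) p / form (P i) (Q i) = c i" if "i \<le> N" for i
  proof -
    have "form (P i) p = (\<Sum>j\<le>N. c j * form (P i) (Q j))"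
      by (subst c) (rule form_sum_right)
    also have "\<dots> = c i * form (P i) (Q i)"
      using that by (subst sum.remove[of _ i]) (auto simp: biorthogonal intro!: sum.neutral)
    finally show ?thesis
      using form_diagonal_nonzero[of i] by simp
  qed
  then show ?thesis
    by (subst c) (auto intro!: sum.cong)
qed

lemma poly_eq_Q_sum_from:
  assumes "degree p \<le> N" and vanish: "\<And>j. j < m \<Longrightarrow> form (P j) p = 0"
  shows "poly p z = (\<Sum>j = m..N. form (P j) p / form (P j) (Q j) * poly (Q j) z)"
proof -
  have "poly p z = (\<Sum>j\<le>N. form (P j) p / form (P j) (Q j) * poly (Q j) z)"
    by (subst Q_expansion[OF assms(1)]) (simp add: poly_sum)
  also have "\<dots> = (\<Sum>j = m..N. form (P j) p / form (P j) (Q j) * poly (Q j) z)"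
    using vanish by (intro sum.mono_neutral_right) auto
  finally show ?thesis .
qed

lemma recurrence:
  assumes denom: "(\<integral>y. poly (Q n) (y powr (1 / real k2)) \<partial>mu2) \<noteq> 0"
  defines "a \<equiv> - (\<integral>y. poly (Q (Suc n)) (y powr (1 / real k2)) \<partial>mu2)
                   / (\<integral>y. poly (Q n) (y powr (1 / real k2)) \<partial>mu2)"
  defines "g \<equiv> (\<lambda>y. y * (poly (Q (Suc n)) (y powr (1 / real k2))
                           + a * poly (Q n) (y powr (1 / real k2))))"
  shows "\<forall>y \<ge> 0. g y = (\<Sum>\<alpha> = n - k1 .. n + k2 + 1.
            (cpair mu1 mu2 (\<lambda>x. poly (P \<alpha>) (x powr (1 / real k1))) g
              / cpair mu1 mu2 (\<lambda>x. poly (P \<alpha>) (x powr (1 / real k1)))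
                                        (\<lambda>y. poly (Q \<alpha>) (y powr (1 / real k2))))
            * poly (Q \<alpha>) (y powr (1 / real k2)))"
proof -
  define R where "R = Q (Suc n) + smult a (Q n)"
  define T where "T = monom 1 k2 * R"
  have g_eq: "g y = poly T (y powr (1 / real k2))" if "0 \<le> y" for y
    unfolding g_def T_def poly_monom_mult_powr_inverse[OF that k2_pos] R_def by simp
  have "g \<in> borel_measurable mu2"
    unfolding g_def by measurable
  then have coefficient: "cpair mu1 mu2 (\<lambda>x. poly (P \<alpha>) (x powr (1 / real k1))) g = form (P \<alpha>) T"
    for \<alpha>
    using g_eq by (rule cpair_eq_form_if_eq_on_nonneg)
  have "(\<integral>y. poly R (y powr (1 / real k2)) \<partial>mu2) = 0"
    unfolding R_def a_def using denom by (simp add: integrable_poly2)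
  then have "form (P j) T = 0" if "j < n - k1" for j
  proof -
    have "degree (monom 1 k1 * P j) \<le> k1 + j"
      using degree_mult_le[of "monom 1 k1" "P j"] P_monic[of j] by (simp add: degree_monom_eq)
    then have "degree (monom 1 k1 * P j) < n"
      using that by linarith
    then have "form (monom 1 k1 * P j) R = 0"
      unfolding R_def by (simp add: form_add_right form_smult_right form_eq_0_if_degree_less)
    then show ?thesis
      unfolding T_def form_monom_mult_right \<open>(\<integral>y. poly R (y powr (1 / real k2)) \<partial>mu2) = 0\<close>
      by simp
  qed
  moreover have "degree T \<le> n + k2 + 1"
    unfolding T_def R_def using Q_monic[of n] Q_monic[of "Suc n"]
    by (intro order.trans[OF degree_mult_le]) (auto simp: degree_monom_eq intro: degree_add_le)
  ultimately have expansion: "poly T z = (\<Sum>\<alpha> = n - k1 .. n + k2 + 1.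
      form (P \<alpha>) T / form (P \<alpha>) (Q \<alpha>) * poly (Q \<alpha>) z)" for z
    by (intro poly_eq_Q_sum_from)
  show ?thesis
  proof (intro allI impI)
    fix y :: real
    assume "0 \<le> y"
    have "g y = (\<Sum>\<alpha> = n - k1 .. n + k2 + 1.
        form (P \<alpha>) T / form (P \<alpha>) (Q \<alpha>) * poly (Q \<alpha>) (y powr (1 / real k2)))"
      unfolding g_eq[OF \<open>0 \<le> y\<close>] by (rule expansion)
    then show "g y = (\<Sum>\<alpha> = n - k1 .. n + k2 + 1.
        (cpair mu1 mu2 (\<lambda>x. poly (P \<alpha>) (x powr (1 / real k1))) g
          / cpair mu1 mu2 (\<lambda>x. poly (P \<alpha>) (x powr (1 / real k1)))
                                    (\<lambda>y. poly (Q \<alpha>) (y powr (1 / real k2))))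
        * poly (Q \<alpha>) (y powr (1 / real k2)))"
      by (simp only: coefficient form_def)
  qed
qed

end

theorem corollary2p2:
  fixes k1 k2 :: nat and mu1 mu2 :: "real measure"
    and P Q :: "nat \<Rightarrow> real poly" and h :: "nat \<Rightarrow> real" and n :: nat
  assumes k1_pos: "k1 > 0" and k2_pos: "k2 > 0"
    and sets1: "sets mu1 = sets borel" and sets2: "sets mu2 = sets borel"
    and supp1: "AE x in mu1. 0 \<le> x" and supp2: "AE y in mu2. 0 \<le> y"
    and diag: "AE p in mu1 \<Otimes>\<^sub>M mu2. fst p + snd p > 0"
    and mom1: "\<And>i::nat. integrable mu1 (\<lambda>x. x powr (real i / real k1))"
    and mom2: "\<And>j::nat. integrable mu2 (\<lambda>y. y powr (real j / real k2))"
    and mom12: "\<And>i j::nat. integrable (mu1 \<Otimes>\<^sub>M mu2)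
        (\<lambda>(x, y). x powr (real i / real k1) * y powr (real j / real k2) / (x + y))"
    and mom12y: "\<And>i j::nat. integrable (mu1 \<Otimes>\<^sub>M mu2)
        (\<lambda>(x, y). x powr (real i / real k1) * (y * y powr (real j / real k2)) / (x + y))"
    and P_monic: "\<And>m. degree (P m) = m \<and> lead_coeff (P m) = 1"
    and Q_monic: "\<And>m. degree (Q m) = m \<and> lead_coeff (Q m) = 1"
    and h_pos: "\<And>m. h m > 0"
    and biorth: "\<And>m l. cpair mu1 mu2 (\<lambda>x. poly (P m) (x powr (1 / real k1)))
                                   (\<lambda>y. poly (Q l) (y powr (1 / real k2)))
                        = (if m = l then h m else 0)"
    and denom: "(\<integral>y. poly (Q n) (y powr (1 / real k2)) \<partial>mu2) \<noteq> 0"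
  shows "let a = - (\<integral>y. poly (Q (Suc n)) (y powr (1 / real k2)) \<partial>mu2)
                   / (\<integral>y. poly (Q n) (y powr (1 / real k2)) \<partial>mu2);
             g = (\<lambda>y. y * (poly (Q (Suc n)) (y powr (1 / real k2))
                           + a * poly (Q n) (y powr (1 / real k2))));
             eta = (\<lambda>\<alpha>. cpair mu1 mu2 (\<lambda>x. poly (P \<alpha>) (x powr (1 / real k1))) g
                        / cpair mu1 mu2 (\<lambda>x. poly (P \<alpha>) (x powr (1 / real k1)))
                                        (\<lambda>y. poly (Q \<alpha>) (y powr (1 / real k2))))
         in \<forall>y \<ge> 0. g y = (\<Sum>\<alpha> = n - k1 .. n + k2 + 1. eta \<alpha> * poly (Q \<alpha>) (y powr (1 / real k2)))"
proof -
  have "P 0 = 1" "Q 0 = 1"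
    using P_monic[of 0] Q_monic[of 0] by (metis degree_0_id one_pCons)+
  then have "integral\<^sup>L (mu1 \<Otimes>\<^sub>M mu2) (\<lambda>(x, y). 1 / (x + y)) = h 0"
    using biorth[of 0 0] by (simp add: cpair_def)
  then have "integral\<^sup>L (mu1 \<Otimes>\<^sub>M mu2) (\<lambda>(x, y). 1 / (x + y)) \<noteq> (0::real)"
    using h_pos[of 0] by simp
  then interpret cauchy_pairing mu1 mu2 k1 k2
    by (rule cauchy_pairing_if_integral_inverse_sum_nonzero[OF k1_pos k2_pos sets1 sets2
          supp1 supp2 diag mom1 mom2])
  interpret cauchy_biorthogonal mu1 mu2 k1 k2 P Q
  proof (intro cauchy_biorthogonal.intro cauchy_biorthogonal_axioms.intro)
    show "form (P m) (Q l) = 0" if "m \<noteq> l" for m l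
      using biorth[of m l] that by (simp add: form_def)
    show "form (P m) (Q m) \<noteq> 0" for m
      using biorth[of m m] h_pos[of m] by (simp add: form_def)
  qed (fact cauchy_pairing_axioms P_monic Q_monic)+
  show ?thesis
    unfolding Let_def using denom by (rule recurrence)
qed

end
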